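(* For each $n\ge2$ let $\overline U_i^n$ denote agent $i$'s first-best payoff in the $n$-agent market. Then $\overline U_i^n(s)\le\overline U_i^{n+1}(s)$ for all $s\in[0,1]$ and all $n$, and $\overline U_i^n$ converges uniformly on $[0,1]$ to $\overline U_i^\infty(s)=s$ as $n\to\infty$.
   Context: Setup (for each $n$). A state $\omega\in\{-1,+1\}$ is drawn with probability $1/2$ each; there are $n$ agents whose signals are, conditional on $\omega$, i.i.d. with distribution $\mathbb F_\omega$ on $[0,1]$ (not depending on $n$), normalized so that $s_k=\mathbb P[\omega=+1\mid s_k]$; $\mathbb F_{-1},\mathbb F_{+1}$ are mutually absolutely continuous with densities, and $\mathbb F=(\mathbb F_{-1}+\mathbb F_{+1})/2$ has a density supported on a non-singleton interval in $[0,1]$. The first-best payoff is $\overline U_i^n(s)=s\,\mathbb P[e(s,s_{-i})\mid\omega=+1]-(1-s)\,\mathbb P[e(s,s_{-i})\mid\omega=-1]$ for $s\in[0,1]$, where $s_{-i}$ are the other $n-1$ signals and $e(s,s_{-i})$ is the event $s\prod_{k\ne i}s_k\ge(1-s)\prod_{k\ne i}(1-s_k)$. *)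

theory Defs
  imports "HOL-Probability.Probability"
begin

definition sig_dist :: "(real \<Rightarrow> real) \<Rightarrow> real measure" where
  "sig_dist f = density lborel (\<lambda>x. ennreal (f x))"

text \<open>Probability, given the state whose signal density is f, that with the other
  m signals (i.i.d. with density f) the event e(s, s_{-i}) occurs:
  s * prod s_k >= (1 - s) * prod (1 - s_k).\<close>
definition event_prob :: "(real \<Rightarrow> real) \<Rightarrow> nat \<Rightarrow> real \<Rightarrow> real" where
  "event_prob f m s =
     measure (PiM {..<m} (\<lambda>_. sig_dist f))
       {x \<in> space (PiM {..<m} (\<lambda>_. sig_dist f)).
          (1 - s) * (\<Prod>k<m. 1 - x k) \<le> s * (\<Prod>k<m. x k)}"

text \<open>First-best payoff of agent i in the n-agent market (n-1 other agents);
  fp, fm are the densities of F_{+1}, F_{-1}.\<close>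
definition first_best :: "(real \<Rightarrow> real) \<Rightarrow> (real \<Rightarrow> real) \<Rightarrow> nat \<Rightarrow> real \<Rightarrow> real" where
  "first_best fp fm n s = s * event_prob fp (n - 1) s - (1 - s) * event_prob fm (n - 1) s"

definition signal_density :: "(real \<Rightarrow> real) \<Rightarrow> bool" where
  "signal_density f \<longleftrightarrow> f \<in> borel_measurable borel \<and> (\<forall>x. 0 \<le> f x)
     \<and> (\<forall>x. x \<notin> {0..1} \<longrightarrow> f x = 0) \<and> prob_space (sig_dist f)"

definition signal_structure :: "(real \<Rightarrow> real) \<Rightarrow> (real \<Rightarrow> real) \<Rightarrow> bool" where
  "signal_structure fp fm \<longleftrightarrow>
     signal_density fp \<and> signal_density fm
     \<comment> \<open>mutual absolute continuity\<close>
     \<and> (AE s in lborel. (0 < fp s \<longleftrightarrow> 0 < fm s))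
     \<comment> \<open>normalization s = P[omega = +1 | s], i.e. fp s / (fp s + fm s) = s\<close>
     \<and> (AE s in lborel. fp s * (1 - s) = s * fm s)
     \<comment> \<open>F = (F_{-1}+F_{+1})/2 has density supported on a non-singleton interval\<close>
     \<and> (\<exists>a b. 0 \<le> a \<and> a < b \<and> b \<le> 1 \<and>
          (AE s in lborel. (s \<in> {a..b} \<longleftrightarrow> 0 < (fp s + fm s) / 2)))"

end

theory Submission
  imports Defs
begin

(* Let F = (F_{+1} + F_{-1})/2. The normalization s = P[omega = +1 | s] says that
   dF_{+1}/dF = 2s and dF_{-1}/dF = 2(1 - s). Hence, with m = n - 1 other agents and P_+, P_-
   the m-fold products of F_{+1}, F_{-1}, the first-best payoff is s P_+(E) - (1 - s) P_-(E),
   where the event E = e(s, .) is exactly the likelihood-ratio set {(1 - s) dP_- <= s dP_+}.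
   By the Neyman-Pearson lemma E maximizes s P_+(B) - (1 - s) P_-(B) over all events B; the
   event of the n-agent market, read as an event about n other signals that ignores the last
   one, competes in the (n+1)-agent market, which gives monotonicity.
   For convergence, s minus the payoff is the Bayes error s P_+(not E) + (1 - s) P_-(E), which
   is at most sqrt(s(1 - s)) times the Bhattacharyya coefficient of P_+ and P_-, i.e. rho^m with
   rho = int 2 sqrt(y(1 - y)) dF(y). Since F has a density it has no atom at 1/2, so rho < 1. *)

section \<open>Product densities and likelihood-ratio tests\<close>

lemma indicator_PiE_eq_prod:
  assumes "finite I" "x \<in> extensional I"
  shows "indicator (Pi\<^sub>E I A) x = (\<Prod>i\<in>I. indicator (A i) (x i) :: ennreal)"
  using assms by (auto simp: indicator_def PiE_iff extensional_def)

lemma PiM_density: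
  fixes w :: "'i \<Rightarrow> 'a \<Rightarrow> ennreal"
  assumes "finite I" "product_sigma_finite M" "product_sigma_finite (\<lambda>i. density (M i) (w i))"
    and w[measurable]: "\<And>i. i \<in> I \<Longrightarrow> w i \<in> borel_measurable (M i)"
  shows "PiM I (\<lambda>i. density (M i) (w i)) = density (PiM I M) (\<lambda>x. \<Prod>i\<in>I. w i (x i))"
proof -
  interpret M: product_sigma_finite M by fact
  interpret D: product_sigma_finite "\<lambda>i. density (M i) (w i)" by fact
  have w_prod[measurable]: "(\<lambda>x. \<Prod>i\<in>I. w i (x i)) \<in> borel_measurable (PiM I M)"
    using \<open>finite I\<close> by measurable
  show ?thesis
  proof (rule D.PiM_eqI[symmetric, OF \<open>finite I\<close>])
    show "sets (density (PiM I M) (\<lambda>x. \<Prod>i\<in>I. w i (x i))) = sets (PiM I (\<lambda>i. density (M i) (w i)))"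
      by (auto intro!: sets_PiM_cong)
  next
    fix A assume A: "\<And>i. i \<in> I \<Longrightarrow> A i \<in> sets (density (M i) (w i))"
    then have [measurable]: "Pi\<^sub>E I A \<in> sets (PiM I M)"
      by (auto intro!: sets_PiM_I_finite \<open>finite I\<close>)
    have "emeasure (density (PiM I M) (\<lambda>x. \<Prod>i\<in>I. w i (x i))) (Pi\<^sub>E I A)
        = (\<integral>\<^sup>+ x. (\<Prod>i\<in>I. w i (x i) * indicator (A i) (x i)) \<partial>PiM I M)"
      using \<open>finite I\<close> by (auto simp: emeasure_density space_PiM PiE_iff prod.distrib
          indicator_PiE_eq_prod intro!: nn_integral_cong)
    also have "\<dots> = (\<Prod>i\<in>I. \<integral>\<^sup>+ y. w i y * indicator (A i) y \<partial>M i)"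
      using A by (intro M.product_nn_integral_prod \<open>finite I\<close>) auto
    also have "\<dots> = (\<Prod>i\<in>I. emeasure (density (M i) (w i)) (A i))"
      using A by (auto simp: emeasure_density intro!: prod.cong)
    finally show "emeasure (density (PiM I M) (\<lambda>x. \<Prod>i\<in>I. w i (x i))) (Pi\<^sub>E I A)
        = (\<Prod>i\<in>I. emeasure (density (M i) (w i)) (A i))" .
  qed
qed

lemma measure_density_eq_integral:
  fixes p :: "'a \<Rightarrow> real"
  assumes [measurable]: "p \<in> borel_measurable M" "C \<in> sets M" and "AE x in M. 0 \<le> p x"
  shows "measure (density M p) C = (\<integral>x. p x * indicator C x \<partial>M)"
proof -
  have "measure (density M p) C = (\<integral>x. indicator C x \<partial>density M p)"
    using sets.sets_into_space[OF assms(2)] by (simp add: Int_absorb2)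
  also have "\<dots> = (\<integral>x. p x * indicator C x \<partial>M)"
    using assms by (subst integral_density) (auto simp: mult.commute)
  finally show ?thesis .
qed

lemma min_le_sqrt_mult:
  fixes u v :: real
  assumes "0 \<le> u" "0 \<le> v"
  shows "min u v \<le> sqrt (u * v)"
proof -
  have "min u v = sqrt (min u v * min u v)"
    using assms by simp
  also have "\<dots> \<le> sqrt (u * v)"
    using assms by (intro real_sqrt_le_mono mult_mono) auto
  finally show ?thesis .
qed

lemma real_sqrt_prod: "sqrt (\<Prod>i\<in>A. f i) = (\<Prod>i\<in>A. sqrt (f i))"
  by (induction A rule: infinite_finite_induct) (simp_all add: real_sqrt_mult)

lemma neyman_pearson:
  fixes p q :: "'a \<Rightarrow> real"
  assumes [measurable]: "p \<in> borel_measurable M" "q \<in> borel_measurable M"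
    and "integrable M p" "integrable M q" "AE x in M. 0 \<le> p x" "AE x in M. 0 \<le> q x"
    and [measurable]: "A \<in> sets M" "B \<in> sets M"
    and test_in: "\<And>x. x \<in> A \<Longrightarrow> a * q x \<le> b * p x"
    and test_out: "\<And>x. x \<in> space M - A \<Longrightarrow> b * p x \<le> a * q x"
  shows "b * measure (density M p) B - a * measure (density M q) B
    \<le> b * measure (density M p) A - a * measure (density M q) A"
proof -
  have weighted_diff: "b * measure (density M p) C - a * measure (density M q) C
      = (\<integral>x. (b * p x - a * q x) * indicator C x \<partial>M)" if [measurable]: "C \<in> sets M" for C
  proof -
    have "(\<integral>x. (b * p x - a * q x) * indicator C x \<partial>M)
        = (\<integral>x. b * (indicator C x * p x) - a * (indicator C x * q x) \<partial>M)"
      by (simp add: algebra_simps)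
    also have "\<dots> = b * (\<integral>x. p x * indicator C x \<partial>M) - a * (\<integral>x. q x * indicator C x \<partial>M)"
      using assms integrable_mult_indicator[OF that, of p] integrable_mult_indicator[OF that, of q]
      by (simp add: mult.commute[of "indicator C _"])
    finally show ?thesis
      using assms by (simp add: measure_density_eq_integral)
  qed
  have integrable_test: "integrable M (\<lambda>x. (b * p x - a * q x) * indicator C x)"
    if "C \<in> sets M" for C
    using assms integrable_mult_indicator[OF that, of "\<lambda>x. b * p x - a * q x"]
    by (simp add: mult.commute)
  have "(\<integral>x. (b * p x - a * q x) * indicator B x \<partial>M) \<le> (\<integral>x. (b * p x - a * q x) * indicator A x \<partial>M)"
  proof (rule integral_mono[OF integrable_test integrable_test])
    fix x assume "x \<in> space M"
    then show "(b * p x - a * q x) * indicator B x \<le> (b * p x - a * q x) * indicator A x"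
      using test_in[of x] test_out[of x] by (auto simp: indicator_def)
  qed simp_all
  then show ?thesis
    by (simp add: weighted_diff)
qed

lemma bhattacharyya_bound:
  fixes p q :: "'a \<Rightarrow> real"
  assumes [measurable]: "p \<in> borel_measurable M" "q \<in> borel_measurable M"
    and "integrable M p" "integrable M q" and nonneg: "AE x in M. 0 \<le> p x" "AE x in M. 0 \<le> q x"
    and [measurable]: "A \<in> sets M" and "0 \<le> a" "0 \<le> b"
    and test_in: "\<And>x. x \<in> A \<Longrightarrow> a * q x \<le> b * p x"
    and test_out: "\<And>x. x \<in> space M - A \<Longrightarrow> b * p x \<le> a * q x"
  shows "b * measure (density M p) (space M - A) + a * measure (density M q) A
    \<le> sqrt (a * b) * (\<integral>x. sqrt (p x * q x) \<partial>M)"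
proof -
  have sum_integrable: "integrable M (\<lambda>x. p x + q x)"
    using assms by simp
  have sqrt_bound: "AE x in M. norm (sqrt (p x * q x)) \<le> norm (p x + q x)"
    using nonneg
  proof eventually_elim
    case (elim x)
    have "sqrt (p x * q x) \<le> sqrt ((p x + q x) * (p x + q x))"
      using elim by (intro real_sqrt_le_mono mult_mono) auto
    then show ?case
      using elim by simp
  qed
  have "integrable M (\<lambda>x. sqrt (p x * q x))"
    by (rule Bochner_Integration.integrable_bound[OF sum_integrable _ sqrt_bound]) simp
  have p_out: "integrable M (\<lambda>x. p x * indicator (space M - A) x)"
    using assms integrable_mult_indicator[of "space M - A" M p] by (simp add: mult.commute)
  have q_in: "integrable M (\<lambda>x. q x * indicator A x)"
    using assms integrable_mult_indicator[of A M q] by (simp add: mult.commute)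
  have "integrable M (\<lambda>x. b * (p x * indicator (space M - A) x) + a * (q x * indicator A x))"
    by (intro Bochner_Integration.integrable_add integrable_mult_right p_out q_in)
  have "b * measure (density M p) (space M - A) + a * measure (density M q) A
      = (\<integral>x. b * (p x * indicator (space M - A) x) + a * (q x * indicator A x) \<partial>M)"
    using assms p_out q_in by (simp add: measure_density_eq_integral integral_add)
  also have "\<dots> \<le> (\<integral>x. sqrt (a * b) * sqrt (p x * q x) \<partial>M)"
  proof (rule integral_mono_AE)
    show "integrable M (\<lambda>x. b * (p x * indicator (space M - A) x) + a * (q x * indicator A x))"
      by fact
    show "integrable M (\<lambda>x. sqrt (a * b) * sqrt (p x * q x))"
      using \<open>integrable M (\<lambda>x. sqrt (p x * q x))\<close> by simp
    show "AE x in M. b * (p x * indicator (space M - A) x) + a * (q x * indicator A x)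
        \<le> sqrt (a * b) * sqrt (p x * q x)"
      using nonneg
    proof eventually_elim
      case (elim x)
      have "min (b * p x) (a * q x) \<le> sqrt (a * b) * sqrt (p x * q x)"
        using min_le_sqrt_mult[of "b * p x" "a * q x"] elim \<open>0 \<le> a\<close> \<open>0 \<le> b\<close>
        by (simp add: real_sqrt_mult[symmetric] mult_ac)
      then show ?case
        using test_in[of x] test_out[of x] elim \<open>0 \<le> a\<close> \<open>0 \<le> b\<close> by (auto simp: indicator_def)
    qed
  qed
  finally show ?thesis
    by simp
qed

lemma measure_PiM_prod_emb:
  assumes "prob_space M" "J \<subseteq> L" "finite L" "X \<in> sets (PiM J (\<lambda>_. M))"
  shows "measure (PiM L (\<lambda>_. M)) (prod_emb L (\<lambda>_. M) J X) = measure (PiM J (\<lambda>_. M)) X"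
proof -
  interpret product_prob_space "\<lambda>_. M" UNIV
    using assms(1) by (rule product_prob_spaceI)
  show ?thesis
    using assms by (simp add: measure_def)
qed

section \<open>The signal model\<close>

locale signal_model =
  fixes fp fm :: "real \<Rightarrow> real"
  assumes signal_structure: "signal_structure fp fm"
begin

definition mix :: "real \<Rightarrow> real" where
  "mix x = (fp x + fm x) / 2"

definition mix_dist :: "real measure" where
  "mix_dist = sig_dist mix"

lemma signal_density_fp: "signal_density fp"
  and signal_density_fm: "signal_density fm"
  using signal_structure by (simp_all add: signal_structure_def)

lemma borel_measurable_fp[measurable]: "fp \<in> borel_measurable borel"
  and borel_measurable_fm[measurable]: "fm \<in> borel_measurable borel"
  using signal_density_fp signal_density_fm by (simp_all add: signal_density_def)

lemma borel_measurable_mix[measurable]: "mix \<in> borel_measurable borel"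
  unfolding mix_def by measurable

lemma mix_nonneg: "0 \<le> mix x"
  using signal_density_fp signal_density_fm by (simp add: signal_density_def mix_def)

lemma mix_eq_0: "x \<notin> {0..1} \<Longrightarrow> mix x = 0"
  using signal_density_fp signal_density_fm by (simp add: signal_density_def mix_def)

lemma sets_mix_dist[simp, measurable_cong]: "sets mix_dist = sets borel"
  and space_mix_dist[simp]: "space mix_dist = UNIV"
  by (simp_all add: mix_dist_def sig_dist_def)

lemma sig_dist_eq_density_mix:
  assumes [measurable]: "f \<in> borel_measurable borel" "g \<in> borel_measurable borel"
    and "AE x in lborel. f x = mix x * g x"
  shows "sig_dist f = density mix_dist (\<lambda>x. ennreal (g x))"
proof -
  have "density mix_dist (\<lambda>x. ennreal (g x)) = density lborel (\<lambda>x. ennreal (mix x) * ennreal (g x))"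
    unfolding mix_dist_def sig_dist_def by (rule density_density_eq) auto
  also have "\<dots> = density lborel (\<lambda>x. ennreal (f x))"
    using assms(3) by (intro density_cong) (auto elim!: AE_mp simp: ennreal_mult' mix_nonneg)
  finally show ?thesis
    by (simp add: sig_dist_def)
qed

lemma sig_dist_fp: "sig_dist fp = density mix_dist (\<lambda>x. ennreal (2 * x))"
  and sig_dist_fm: "sig_dist fm = density mix_dist (\<lambda>x. ennreal (2 * (1 - x)))"
proof -
  have normalized: "AE x in lborel. fp x * (1 - x) = x * fm x"
    using signal_structure by (simp add: signal_structure_def)
  show "sig_dist fp = density mix_dist (\<lambda>x. ennreal (2 * x))"
    using normalized by (intro sig_dist_eq_density_mix) (auto elim!: AE_mp simp: mix_def algebra_simps)
  show "sig_dist fm = density mix_dist (\<lambda>x. ennreal (2 * (1 - x)))"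
    using normalized by (intro sig_dist_eq_density_mix) (auto elim!: AE_mp simp: mix_def algebra_simps)
qed

lemma prob_space_sig_dist_fp: "prob_space (sig_dist fp)"
  and prob_space_sig_dist_fm: "prob_space (sig_dist fm)"
  using signal_density_fp signal_density_fm by (simp_all add: signal_density_def)

lemma nn_integral_signal_density:
  assumes "signal_density f"
  shows "(\<integral>\<^sup>+x. ennreal (f x) \<partial>lborel) = 1"
proof -
  have [measurable]: "f \<in> borel_measurable borel" and "prob_space (sig_dist f)"
    using assms by (simp_all add: signal_density_def)
  then have "emeasure (sig_dist f) (space (sig_dist f)) = 1"
    using prob_space.emeasure_space_1 by blast
  then show ?thesis
    by (simp add: sig_dist_def emeasure_density)
qed

lemma prob_space_mix_dist: "prob_space mix_dist"
proof
  have "emeasure mix_dist (space mix_dist) = (\<integral>\<^sup>+x. (ennreal (fp x) + ennreal (fm x)) / 2 \<partial>lborel)"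
    using signal_density_fp signal_density_fm
    by (auto simp: mix_dist_def sig_dist_def emeasure_density mix_def signal_density_def
        ennreal_divide_numeral[symmetric] ennreal_plus intro!: nn_integral_cong)
  also have "\<dots> = ((\<integral>\<^sup>+x. ennreal (fp x) \<partial>lborel) + (\<integral>\<^sup>+x. ennreal (fm x) \<partial>lborel)) / 2"
    by (simp add: nn_integral_add nn_integral_divide)
  also have "\<dots> = 1"
    using nn_integral_signal_density[OF signal_density_fp] nn_integral_signal_density[OF signal_density_fm]
    by (simp add: ennreal_divide_self)
  finally show "emeasure mix_dist (space mix_dist) = 1" .
qed

lemma AE_mix_dist_unit: "AE x in mix_dist. x \<in> {0..1}"
proof -
  have "0 < mix x \<Longrightarrow> x \<in> {0..1}" for x
    using mix_eq_0 by force
  then show ?thesis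
    unfolding mix_dist_def sig_dist_def by (subst AE_density) (auto intro!: AE_I2)
qed

lemma AE_mix_dist_neq: "AE x in mix_dist. x \<noteq> c"
  unfolding mix_dist_def sig_dist_def
  by (rule AE_density[THEN iffD2]) (auto intro: AE_mp[OF AE_lborel_singleton[of c]])

abbreviation mix_pow :: "nat \<Rightarrow> (nat \<Rightarrow> real) measure" where
  "mix_pow m \<equiv> PiM {..<m} (\<lambda>_. mix_dist)"

lemma product_sigma_finite_mix_dist: "product_sigma_finite (\<lambda>_. mix_dist)"
  using prob_space_mix_dist by (simp add: product_sigma_finite_def prob_space_imp_sigma_finite)

lemma AE_mix_pow_unit: "AE x in mix_pow m. \<forall>k\<in>{..<m}. x k \<in> {0..1}"
  using AE_mix_dist_unit prob_space_mix_dist by (intro AE_finite_allI AE_PiM_component) auto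

lemma integrable_prod_mix_pow:
  fixes g :: "real \<Rightarrow> real"
  assumes [measurable]: "g \<in> borel_measurable borel" and bound: "\<And>y. y \<in> {0..1} \<Longrightarrow> \<bar>g y\<bar> \<le> c"
  shows "integrable (mix_pow m) (\<lambda>x. \<Prod>k<m. g (x k))"
proof -
  interpret prob_space "mix_pow m"
    by (intro prob_space_PiM prob_space_mix_dist)
  show ?thesis
  proof (rule integrable_const_bound)
    show "AE x in mix_pow m. norm (\<Prod>k<m. g (x k)) \<le> c ^ m"
      using AE_mix_pow_unit
    proof eventually_elim
      case (elim x)
      have "\<bar>\<Prod>k<m. g (x k)\<bar> = (\<Prod>k<m. \<bar>g (x k)\<bar>)"
        by (rule abs_prod)
      also have "\<dots> \<le> (\<Prod>k<m. c)"
        using elim by (intro prod_mono) (auto intro: bound)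
      finally show ?case
        by simp
    qed
  qed measurable
qed

lemma PiM_density_mix_dist:
  fixes g :: "real \<Rightarrow> real"
  assumes [measurable]: "g \<in> borel_measurable borel" and "\<And>y. y \<in> {0..1} \<Longrightarrow> 0 \<le> g y"
    and "prob_space (density mix_dist (\<lambda>y. ennreal (g y)))"
  shows "PiM {..<m} (\<lambda>_. density mix_dist (\<lambda>y. ennreal (g y)))
    = density (mix_pow m) (\<lambda>x. ennreal (\<Prod>k<m. g (x k)))"
proof -
  have "product_sigma_finite (\<lambda>_::nat. density mix_dist (\<lambda>y. ennreal (g y)))"
    using assms(3) by (simp add: product_sigma_finite_def prob_space_imp_sigma_finite)
  then have "PiM {..<m} (\<lambda>_. density mix_dist (\<lambda>y. ennreal (g y)))
      = density (mix_pow m) (\<lambda>x. \<Prod>k<m. ennreal (g (x k)))"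
    using product_sigma_finite_mix_dist by (intro PiM_density) auto
  also have "\<dots> = density (mix_pow m) (\<lambda>x. ennreal (\<Prod>k<m. g (x k)))"
    using AE_mix_pow_unit[of m]
    by (intro density_cong) (auto elim!: eventually_mono intro!: prod_ennreal assms(2))
  finally show ?thesis .
qed

definition lik_pos :: "nat \<Rightarrow> (nat \<Rightarrow> real) \<Rightarrow> real" where
  "lik_pos m x = (\<Prod>k<m. 2 * x k)"

definition lik_neg :: "nat \<Rightarrow> (nat \<Rightarrow> real) \<Rightarrow> real" where
  "lik_neg m x = (\<Prod>k<m. 2 * (1 - x k))"

lemma borel_measurable_lik_pos[measurable]: "lik_pos m \<in> borel_measurable (mix_pow m)"
  and borel_measurable_lik_neg[measurable]: "lik_neg m \<in> borel_measurable (mix_pow m)"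
  unfolding lik_pos_def lik_neg_def by measurable

lemma integrable_lik_pos: "integrable (mix_pow m) (lik_pos m)"
  and integrable_lik_neg: "integrable (mix_pow m) (lik_neg m)"
  unfolding lik_pos_def lik_neg_def by (intro integrable_prod_mix_pow[where c = 2]; force)+

lemma AE_lik_pos_nonneg: "AE x in mix_pow m. 0 \<le> lik_pos m x"
  and AE_lik_neg_nonneg: "AE x in mix_pow m. 0 \<le> lik_neg m x"
  using AE_mix_pow_unit[of m] by (auto elim!: eventually_mono simp: lik_pos_def lik_neg_def intro!: prod_nonneg)

lemma PiM_sig_dist_fp: "PiM {..<m} (\<lambda>_. sig_dist fp) = density (mix_pow m) (lik_pos m)"
  using prob_space_sig_dist_fp unfolding sig_dist_fp lik_pos_def
  by (intro PiM_density_mix_dist) auto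

lemma PiM_sig_dist_fm: "PiM {..<m} (\<lambda>_. sig_dist fm) = density (mix_pow m) (lik_neg m)"
  using prob_space_sig_dist_fm unfolding sig_dist_fm lik_neg_def
  by (intro PiM_density_mix_dist) auto

definition event_set :: "nat \<Rightarrow> real \<Rightarrow> (nat \<Rightarrow> real) set" where
  "event_set m s = {x \<in> space (mix_pow m). (1 - s) * (\<Prod>k<m. 1 - x k) \<le> s * (\<Prod>k<m. x k)}"

lemma sets_event_set[measurable]: "event_set m s \<in> sets (mix_pow m)"
  unfolding event_set_def by measurable

lemma event_set_iff_lik:
  "x \<in> event_set m s \<longleftrightarrow> x \<in> space (mix_pow m) \<and> (1 - s) * lik_neg m x \<le> s * lik_pos m x"
proof -
  have "lik_pos m x = 2 ^ m * (\<Prod>k<m. x k)"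
    by (simp add: lik_pos_def prod.distrib)
  moreover have "lik_neg m x = 2 ^ m * (\<Prod>k<m. 1 - x k)"
    unfolding lik_neg_def by (subst prod.distrib) simp
  ultimately show ?thesis
    by (simp add: event_set_def mult.left_commute[of _ "2 ^ m"])
qed

lemma event_prob_eq_measure:
  "event_prob f m s = measure (PiM {..<m} (\<lambda>_. sig_dist f)) (event_set m s)"
  by (simp add: event_prob_def event_set_def space_PiM sig_dist_def)

lemma first_best_Suc:
  "first_best fp fm (Suc m) s = s * measure (density (mix_pow m) (lik_pos m)) (event_set m s)
    - (1 - s) * measure (density (mix_pow m) (lik_neg m)) (event_set m s)"
  by (simp add: first_best_def event_prob_eq_measure PiM_sig_dist_fp PiM_sig_dist_fm)

lemma measure_sig_dist_prod_emb:
  assumes "prob_space (sig_dist f)"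
  shows "measure (PiM {..<Suc m} (\<lambda>_. sig_dist f)) (prod_emb {..<Suc m} (\<lambda>_. mix_dist) {..<m} (event_set m s))
    = measure (PiM {..<m} (\<lambda>_. sig_dist f)) (event_set m s)"
proof -
  have "prod_emb {..<Suc m} (\<lambda>_. mix_dist) {..<m} (event_set m s)
      = prod_emb {..<Suc m} (\<lambda>_. sig_dist f) {..<m} (event_set m s)"
    by (simp add: prod_emb_def sig_dist_def)
  moreover have "event_set m s \<in> sets (PiM {..<m} (\<lambda>_. sig_dist f))"
    using sets_event_set by (simp add: sig_dist_def cong: sets_PiM_cong)
  ultimately show ?thesis
    using assms by (simp add: measure_PiM_prod_emb)
qed

lemma first_best_mono: "first_best fp fm (Suc m) s \<le> first_best fp fm (Suc (Suc m)) s"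
proof -
  let ?B = "prod_emb {..<Suc m} (\<lambda>_. mix_dist) {..<m} (event_set m s)"
  have [measurable]: "?B \<in> sets (mix_pow (Suc m))"
    by (rule measurable_prod_emb) auto
  have "first_best fp fm (Suc m) s = s * measure (density (mix_pow (Suc m)) (lik_pos (Suc m))) ?B
      - (1 - s) * measure (density (mix_pow (Suc m)) (lik_neg (Suc m))) ?B"
    by (simp add: first_best_def event_prob_eq_measure measure_sig_dist_prod_emb
        prob_space_sig_dist_fp prob_space_sig_dist_fm flip: PiM_sig_dist_fp PiM_sig_dist_fm)
  also have "\<dots> \<le> first_best fp fm (Suc (Suc m)) s"
    unfolding first_best_Suc
    by (rule neyman_pearson) (auto simp: event_set_iff_lik integrable_lik_pos integrable_lik_neg
        AE_lik_pos_nonneg AE_lik_neg_nonneg)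
  finally show ?thesis .
qed

definition sqrt_lik :: "real \<Rightarrow> real" where
  "sqrt_lik y = sqrt (2 * y * (2 * (1 - y)))"

definition bhattacharyya :: real where
  "bhattacharyya = (\<integral>y. sqrt_lik y \<partial>mix_dist)"

lemma borel_measurable_sqrt_lik[measurable]: "sqrt_lik \<in> borel_measurable borel"
  unfolding sqrt_lik_def by measurable

lemma sqrt_lik_nonneg: "y \<in> {0..1} \<Longrightarrow> 0 \<le> sqrt_lik y"
  unfolding sqrt_lik_def by simp

lemma sqrt_lik_le_1: "sqrt_lik y \<le> 1"
  and sqrt_lik_less_1: "y \<noteq> 1 / 2 \<Longrightarrow> sqrt_lik y < 1"
proof -
  have "2 * y * (2 * (1 - y)) = 1 - (2 * y - 1) ^ 2"
    by (simp add: power2_eq_square algebra_simps)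
  moreover have "y \<noteq> 1 / 2 \<Longrightarrow> 0 < (2 * y - 1) ^ 2"
    by simp
  ultimately show "sqrt_lik y \<le> 1" "y \<noteq> 1 / 2 \<Longrightarrow> sqrt_lik y < 1"
    unfolding sqrt_lik_def by simp_all
qed

lemma integrable_sqrt_lik: "integrable mix_dist sqrt_lik"
proof -
  interpret prob_space mix_dist
    by (rule prob_space_mix_dist)
  show ?thesis
  proof (rule integrable_const_bound)
    show "AE y in mix_dist. norm (sqrt_lik y) \<le> 1"
      using AE_mix_dist_unit by eventually_elim (simp add: sqrt_lik_nonneg sqrt_lik_le_1)
  qed measurable
qed

lemma bhattacharyya_nonneg: "0 \<le> bhattacharyya"
proof -
  have "AE y in mix_dist. 0 \<le> sqrt_lik y"
    using AE_mix_dist_unit by (rule eventually_mono) (rule sqrt_lik_nonneg)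
  then show ?thesis
    by (simp add: bhattacharyya_def integral_nonneg_AE)
qed

lemma bhattacharyya_less_1: "bhattacharyya < 1"
proof -
  interpret prob_space mix_dist
    by (rule prob_space_mix_dist)
  have "bhattacharyya < (\<integral>y. 1 \<partial>mix_dist)"
    unfolding bhattacharyya_def
  proof (rule integral_less_AE_space)
    show "AE y in mix_dist. sqrt_lik y < 1"
      using AE_mix_dist_neq[of "1 / 2"] by (auto elim!: eventually_mono intro: sqrt_lik_less_1)
  qed (use emeasure_space_1 in \<open>simp_all add: integrable_sqrt_lik\<close>)
  then show ?thesis
    using prob_space by simp
qed

lemma integral_sqrt_lik_prod:
  "(\<integral>x. sqrt (lik_pos m x * lik_neg m x) \<partial>mix_pow m) = bhattacharyya ^ m"
proof -
  interpret product_sigma_finite "\<lambda>_::nat. mix_dist"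
    by (rule product_sigma_finite_mix_dist)
  have "sqrt (lik_pos m x * lik_neg m x) = (\<Prod>k<m. sqrt_lik (x k))" for x
    by (simp add: lik_pos_def lik_neg_def sqrt_lik_def real_sqrt_prod flip: prod.distrib)
  then show ?thesis
    using product_integral_prod[of "{..<m}" "\<lambda>_. sqrt_lik"]
    by (simp add: integrable_sqrt_lik bhattacharyya_def)
qed

lemma first_best_gap:
  "s - first_best fp fm (Suc m) s
    = s * measure (density (mix_pow m) (lik_pos m)) (space (mix_pow m) - event_set m s)
      + (1 - s) * measure (density (mix_pow m) (lik_neg m)) (event_set m s)"
proof -
  interpret prob_space "density (mix_pow m) (lik_pos m)"
    using prob_space_PiM[OF prob_space_sig_dist_fp, of "{..<m}"] by (simp only: PiM_sig_dist_fp)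
  have complement: "measure (density (mix_pow m) (lik_pos m)) (space (mix_pow m) - event_set m s)
      = 1 - measure (density (mix_pow m) (lik_pos m)) (event_set m s)"
    using prob_compl[of "event_set m s"] by simp
  show ?thesis
    unfolding complement first_best_Suc by (simp add: algebra_simps)
qed

lemma first_best_le_self:
  assumes "s \<in> {0..1}"
  shows "first_best fp fm (Suc m) s \<le> s"
proof -
  have "0 \<le> s * measure (density (mix_pow m) (lik_pos m)) (space (mix_pow m) - event_set m s)
      + (1 - s) * measure (density (mix_pow m) (lik_neg m)) (event_set m s)"
    using assms by (intro add_nonneg_nonneg mult_nonneg_nonneg) auto
  then show ?thesis
    using first_best_gap[of s m] by linarith
qed

lemma first_best_error:
  assumes "s \<in> {0..1}"
  shows "s - first_best fp fm (Suc m) s \<le> bhattacharyya ^ m"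
proof -
  have "s - first_best fp fm (Suc m) s
      \<le> sqrt ((1 - s) * s) * (\<integral>x. sqrt (lik_pos m x * lik_neg m x) \<partial>mix_pow m)"
    unfolding first_best_gap using assms
    by (intro bhattacharyya_bound) (auto simp: event_set_iff_lik integrable_lik_pos integrable_lik_neg
        AE_lik_pos_nonneg AE_lik_neg_nonneg)
  also have "\<dots> \<le> bhattacharyya ^ m"
    using assms bhattacharyya_nonneg
    by (simp add: integral_sqrt_lik_prod mult_le_one mult_left_le_one_le)
  finally show ?thesis .
qed

lemma abs_first_best_minus_le:
  assumes "s \<in> {0..1}"
  shows "\<bar>first_best fp fm (Suc m) s - s\<bar> \<le> bhattacharyya ^ m"
  using first_best_le_self[OF assms] first_best_error[OF assms] by simp

end

theorem lemmaE1:
  fixes fp fm :: "real \<Rightarrow> real"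
  assumes "signal_structure fp fm"
  shows "(\<forall>n\<ge>2. \<forall>s\<in>{0..1}. first_best fp fm n s \<le> first_best fp fm (n + 1) s)
     \<and> uniform_limit {0..1} (\<lambda>n s. first_best fp fm n s) (\<lambda>s. s) sequentially"
proof
  interpret signal_model fp fm
    using assms by (rule signal_model.intro)
  show "\<forall>n\<ge>2. \<forall>s\<in>{0..1}. first_best fp fm n s \<le> first_best fp fm (n + 1) s"
  proof (intro allI impI ballI)
    fix n :: nat and s :: real
    assume "2 \<le> n"
    then obtain m where "n = Suc m"
      by (cases n) auto
    then show "first_best fp fm n s \<le> first_best fp fm (n + 1) s"
      using first_best_mono by simp
  qed
  show "uniform_limit {0..1} (\<lambda>n s. first_best fp fm n s) (\<lambda>s. s) sequentially"
    unfolding uniform_limit_iff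
  proof (intro allI impI)
    fix e :: real
    assume "0 < e"
    have "\<forall>\<^sub>F m in sequentially. bhattacharyya ^ m < e"
      using bhattacharyya_nonneg bhattacharyya_less_1
      by (intro order_tendstoD(2)[OF LIMSEQ_power_zero \<open>0 < e\<close>]) simp
    then have "\<forall>\<^sub>F m in sequentially. \<forall>s\<in>{0..1}. dist (first_best fp fm (Suc m) s) s < e"
      by eventually_elim (auto simp: dist_real_def intro: le_less_trans abs_first_best_minus_le)
    then show "\<forall>\<^sub>F n in sequentially. \<forall>s\<in>{0..1}. dist (first_best fp fm n s) s < e"
      by (rule eventually_sequentially_Suc[THEN iffD1])
  qed
qed

end
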